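(* Let $M$ be a colored dependency multigraph with $n$ nodes and $m$ edges (counted over all alternatives of all nodes) and with final node $F$. Then the multigraph collapse algorithm, run on $(M,F)$, terminates and runs in time $\mathcal{O}(d\cdot(n+m))$, where $d$ is the number of collapsed graphs (DAGs) it outputs.
   Context: A \emph{colored dependency multigraph} consists of a finite set $V$ of $n$ nodes (blocks), a distinguished final node $F\in V$, and for each node $v\in V$ a finite (possibly empty) list of \emph{alternatives} (colors). Each alternative of $v$ is a set of nodes on which $v$ depends, and an edge $(u,v)$ of a given color is present exactly when $u$ belongs to that alternative of $v$. The same pair of nodes may be joined by edges of several colors. A node with no alternatives has no dependencies. The graph obtained by following all edges of all colors is assumed acyclic. The total number of edges over all alternatives of all nodes is $m$. A node is \emph{branching} if it has at least two alternatives. Work in the standard RAM model. \textbf{DFS-Until.} Given a graph $G$ of this kind and the node $F$, DFS-Until performs a depth-first search backward from $F$. It follows each visited node's edges to its dependencies, visits each node at most once, and records the visited nodes together with their incoming dependency edges as a graph $D$. It halts and returns $(v,D)$ as soon as it visits a branching node $v$. If the search completes without visiting any branching node, it returns $(\mathrm{NULL},D)$. One call runs in time $\mathcal{O}(n+m)$. \textbf{Collapse algorithm.} Initialize an empty output list and a queue containing $M$. While the queue is nonempty: \begin{itemize} \item dequeue a graph $G$ and compute $(v,D)=\text{DFS-Until}(G,F)$; \item if $v=\mathrm{NULL}$, append $D$ to the output; \item otherwise, for each alternative $c$ of $v$ in $G$, enqueue a copy of $G$ in which $v$ keeps only alternative $c$ and the edges of all other alternatives of $v$ are deleted. \end{itemize}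 The output is a list of $d$ directed acyclic graphs. *)

theory Defs
  imports Main "HOL-Library.While_Combinator"
begin

text \<open>Nodes are 0..<n. A colored dependency multigraph is given by the list of
alternatives of each node; each alternative is a set of nodes on which the node depends.\<close>

type_synonym cgraph = "nat \<Rightarrow> nat set list"

definition dep_edges :: "cgraph \<Rightarrow> (nat \<times> nat) set" where
  "dep_edges G = {(u, v). \<exists>A \<in> set (G v). u \<in> A}"

definition wf_cdm :: "nat \<Rightarrow> nat \<Rightarrow> cgraph \<Rightarrow> bool" where
  "wf_cdm n F G \<longleftrightarrow> F < n \<and> (\<forall>v. n \<le> v \<longrightarrow> G v = [])
     \<and> (\<forall>v<n. \<forall>A \<in> set (G v). A \<subseteq> {..<n}) \<and> acyclic (dep_edges G)"

definition num_edges :: "nat \<Rightarrow> cgraph \<Rightarrow> nat" where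
  "num_edges n G = (\<Sum>v<n. \<Sum>A\<leftarrow>G v. card A)"

definition branching :: "cgraph \<Rightarrow> nat \<Rightarrow> bool" where
  "branching G v \<longleftrightarrow> 2 \<le> length (G v)"

text \<open>DFS-Until as a stack machine; dcost counts elementary operations
  (one per popped stack entry plus one per pushed dependency).\<close>
record dfs_state =
  stk :: "nat list"
  vis :: "nat set"
  dedges :: "(nat \<times> nat) set"
  found :: "nat option"
  dcost :: nat

definition dfs_step :: "cgraph \<Rightarrow> dfs_state \<Rightarrow> dfs_state" where
  "dfs_step G s = (case stk s of
      [] \<Rightarrow> s
    | v # rest \<Rightarrow>
        (if v \<in> vis s then s\<lparr>stk := rest, dcost := dcost s + 1\<rparr>
         else if branching G v then
           s\<lparr>stk := rest, vis := insert v (vis s), found := Some v, dcost := dcost s + 1\<rparr>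
         else
           (let ds = sorted_list_of_set (\<Union>(set (G v))) in
             s\<lparr>stk := ds @ rest, vis := insert v (vis s),
               dedges := dedges s \<union> {(u, v) | u. u \<in> \<Union>(set (G v))},
               dcost := dcost s + 1 + length ds\<rparr>)))"

definition dfs_until :: "cgraph \<Rightarrow> nat \<Rightarrow> dfs_state option" where
  "dfs_until G F = while_option (\<lambda>s. stk s \<noteq> [] \<and> found s = None) (dfs_step G)
      \<lparr>stk = [F], vis = {}, dedges = {}, found = None, dcost = 0\<rparr>"

text \<open>An output DAG D is recorded as (visited nodes, dependency edges).
  ccost: one unit per iteration, plus the cost of the DFS-Until call, plus one unit to append
  an output, plus the cost n + m(G) + 1 of each enqueued copy of G.\<close>
record col_state =
  queue :: "cgraph list"
  outp :: "(nat set \<times> (nat \<times> nat) set) list"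
  ccost :: nat

definition col_step :: "nat \<Rightarrow> nat \<Rightarrow> col_state \<Rightarrow> col_state option" where
  "col_step n F st = (case queue st of
      [] \<Rightarrow> Some st
    | G # rest \<Rightarrow>
        (case dfs_until G F of
           None \<Rightarrow> None
         | Some ds \<Rightarrow>
             (let c0 = ccost st + 1 + dcost ds in
              case found ds of
                None \<Rightarrow> Some (st\<lparr>queue := rest, outp := outp st @ [(vis ds, dedges ds)],
                                 ccost := c0 + 1\<rparr>)
              | Some v \<Rightarrow> Some (st\<lparr>queue := rest @ map (\<lambda>A. G(v := [A])) (G v),
                                 ccost := c0 + length (G v) * (n + num_edges n G + 1)\<rparr>))))"

text \<open>Result None means that the algorithm (or some inner DFS-Until call) does not terminate.\<close>
definition collapse :: "nat \<Rightarrow> nat \<Rightarrow> cgraph \<Rightarrow> col_state option" where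
  "collapse n F M =
     (case while_option (\<lambda>s. s \<noteq> None \<and> queue (the s) \<noteq> []) (\<lambda>s. col_step n F (the s))
             (Some \<lparr>queue = [M], outp = [], ccost = 0\<rparr>) of
        Some (Some st) \<Rightarrow> Some st
      | _ \<Rightarrow> None)"

end

theory Submission
  imports Defs
begin

text \<open>DFS-Until pops every stack entry once and expands every node at most once, so one call
  costs at most 1 + 2m. For the collapse algorithm, the graphs that are ever enqueued form a
  tree in which every inner node (a graph whose DFS meets a branching node) has at least two
  children. Such a tree has at most as many inner nodes as leaves, and the leaves are exactly the
  output DAGs. An inner node with k children costs O(k (n + m)) and a leaf O(n + m), so charging
  6(n + m) to every queued graph and 9(n + m) to every output pays for the whole run. Termination
  follows because each enqueued child fixes one more alternative, which bounds the tree by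
  the product of the numbers of alternatives.\<close>

lemma while_option_Some_invariant:
  fixes f :: "'s \<Rightarrow> nat"
  assumes step: "\<And>s. P s \<Longrightarrow> b s \<Longrightarrow> P (c s) \<and> f (c s) < f s" and init: "P s"
  obtains t where "while_option b c s = Some t" "P t" "\<not> b t"
proof -
  obtain t where t: "while_option b c s = Some t"
    using measure_while_option_Some[of P b c f, OF step init] by blast
  have "P t"
    by (rule while_option_rule[where P = P, OF _ t init]) (simp add: step)
  from t this while_option_stop[OF t] show ?thesis by (rule that)
qed

lemma card_Union_le_sum_list: "card (\<Union>(set As)) \<le> (\<Sum>A\<leftarrow>As. card A)"
proof (induction As)
  case (Cons A As)
  have "card (\<Union>(set (A # As))) \<le> card A + card (\<Union>(set As))"
    by (simp add: card_Un_le)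
  with Cons show ?case by simp
qed simp

definition cgraph_on :: "nat \<Rightarrow> cgraph \<Rightarrow> bool" where
  "cgraph_on n G \<longleftrightarrow> (\<forall>v. n \<le> v \<longrightarrow> G v = []) \<and> (\<forall>v<n. \<forall>A \<in> set (G v). A \<subseteq> {..<n})"

lemma cgraph_on_deps_subset: "cgraph_on n G \<Longrightarrow> \<Union>(set (G v)) \<subseteq> {..<n}"
  unfolding cgraph_on_def by (cases "v < n") auto

lemma sum_card_deps_le_num_edges:
  assumes "V \<subseteq> {..<n}"
  shows "(\<Sum>v\<in>V. card (\<Union>(set (G v)))) \<le> num_edges n G"
proof -
  have "(\<Sum>v\<in>V. card (\<Union>(set (G v)))) \<le> (\<Sum>v<n. card (\<Union>(set (G v))))"
    using assms by (intro sum_mono2) auto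
  also have "\<dots> \<le> num_edges n G"
    unfolding num_edges_def by (intro sum_mono card_Union_le_sum_list)
  finally show ?thesis .
qed

text \<open>Each pushed entry costs one unit when pushed and one when popped; the pops still to come
  are accounted for by the stack length.\<close>
definition dfs_inv :: "nat \<Rightarrow> cgraph \<Rightarrow> dfs_state \<Rightarrow> bool" where
  "dfs_inv n G s \<longleftrightarrow> set (stk s) \<subseteq> {..<n} \<and> vis s \<subseteq> {..<n} \<and>
     (\<forall>v. found s = Some v \<longrightarrow> v < n \<and> branching G v) \<and>
     dcost s + length (stk s) \<le> 1 + 2 * (\<Sum>v\<in>vis s. card (\<Union>(set (G v))))"

text \<open>Lexicographic in (unvisited nodes, stack length): visiting a node pushes at most n
  entries.\<close>
definition dfs_measure :: "nat \<Rightarrow> dfs_state \<Rightarrow> nat" where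
  "dfs_measure n s = (n - card (vis s)) * (n + 1) + length (stk s)"

lemma dfs_measure_visit_lt:
  assumes "c < n" "a \<le> b + n"
  shows "(n - Suc c) * (n + 1) + a < (n - c) * (n + 1) + Suc b"
proof -
  obtain j where j: "n - c = Suc j" using assms(1) by (metis Suc_diff_Suc)
  then have "n - Suc c = j" by simp
  with j assms(2) show ?thesis by simp
qed

lemma dfs_step_inv:
  assumes G: "cgraph_on n G" and I: "dfs_inv n G s"
    and st: "stk s = v # rest" and nf: "found s = None"
  shows "dfs_inv n G (dfs_step G s) \<and> dfs_measure n (dfs_step G s) < dfs_measure n s"
proof (cases "v \<in> vis s")
  case True
  then show ?thesis using I st unfolding dfs_step_def dfs_inv_def dfs_measure_def by auto
next
  case new: False
  have v: "v < n" and vis: "vis s \<subseteq> {..<n}" using I st unfolding dfs_inv_def by auto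
  then have fin: "finite (vis s)" by (meson finite_lessThan finite_subset)
  have "card (insert v (vis s)) \<le> n"
    using v vis by (metis card_lessThan card_mono finite_lessThan insert_subset lessThan_iff)
  then have c: "card (vis s) < n" using fin new by simp
  have sum: "(\<Sum>w\<in>insert v (vis s). card (\<Union>(set (G w))))
      = card (\<Union>(set (G v))) + (\<Sum>w\<in>vis s. card (\<Union>(set (G w))))"
    using fin new by simp
  show ?thesis
  proof (cases "branching G v")
    case True
    have "dfs_measure n (dfs_step G s) < dfs_measure n s"
      using dfs_measure_visit_lt[OF c, of "length rest" "length rest"] True st new fin
      unfolding dfs_step_def dfs_measure_def by simp
    then show ?thesis using True I st new v fin sum unfolding dfs_step_def dfs_inv_def by auto
  next
    case False
    define U where "U = \<Union>(set (G v))"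
    have U: "U \<subseteq> {..<n}" using cgraph_on_deps_subset[OF G] U_def by auto
    then have "finite U" by (meson finite_lessThan finite_subset)
    have "card U \<le> n" using U by (metis card_lessThan card_mono finite_lessThan)
    have step: "dfs_step G s = s\<lparr>stk := sorted_list_of_set U @ rest, vis := insert v (vis s),
        dedges := dedges s \<union> {(u, v) | u. u \<in> U}, dcost := dcost s + 1 + card U\<rparr>"
      using st new False unfolding dfs_step_def U_def by (simp add: Let_def)
    have "dfs_measure n (dfs_step G s) < dfs_measure n s"
      using dfs_measure_visit_lt[OF c, of "card U + length rest" "length rest"] \<open>card U \<le> n\<close>
        st new fin unfolding step dfs_measure_def by simp
    then show ?thesis using I st new v U \<open>finite U\<close> sum nf
      unfolding step dfs_inv_def U_def[symmetric] by auto
  qed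
qed

lemma dfs_until_Some:
  assumes G: "cgraph_on n G" and F: "F < n"
  obtains ds where "dfs_until G F = Some ds" "dcost ds \<le> 1 + 2 * num_edges n G"
    "\<And>v. found ds = Some v \<Longrightarrow> v < n \<and> branching G v"
proof -
  have step: "dfs_inv n G (dfs_step G s) \<and> dfs_measure n (dfs_step G s) < dfs_measure n s"
    if I: "dfs_inv n G s" and ne: "stk s \<noteq> [] \<and> found s = None" for s
  proof -
    obtain v rest where "stk s = v # rest" using ne by (cases "stk s") auto
    with dfs_step_inv[OF G I] ne show ?thesis by blast
  qed
  have init: "dfs_inv n G \<lparr>stk = [F], vis = {}, dedges = {}, found = None, dcost = 0\<rparr>"
    using F unfolding dfs_inv_def by simp
  obtain ds where run: "dfs_until G F = Some ds" and inv: "dfs_inv n G ds"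
    using while_option_Some_invariant[of "dfs_inv n G" "\<lambda>s. stk s \<noteq> [] \<and> found s = None"
      "dfs_step G" "dfs_measure n", OF step init, folded dfs_until_def] by blast
  have "dcost ds \<le> 1 + 2 * num_edges n G"
    using inv sum_card_deps_le_num_edges[of "vis ds" n G] unfolding dfs_inv_def by linarith
  moreover have "\<And>v. found ds = Some v \<Longrightarrow> v < n \<and> branching G v"
    using inv unfolding dfs_inv_def by blast
  ultimately show ?thesis using run that by blast
qed

text \<open>An upper bound on the number of leaves of the collapse tree below G.\<close>
definition num_choices :: "nat \<Rightarrow> cgraph \<Rightarrow> nat" where
  "num_choices n G = (\<Prod>w<n. max 1 (length (G w)))"

lemma num_choices_pos: "1 \<le> num_choices n G"
  unfolding num_choices_def by (rule prod_ge_1) simp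

lemma num_choices_fun_upd_alt:
  assumes "v < n" "1 \<le> length (G v)"
  shows "num_choices n G = length (G v) * num_choices n (G(v := [A]))"
proof -
  have "num_choices n H = max 1 (length (H v)) * (\<Prod>w\<in>{..<n} - {v}. max 1 (length (H w)))"
    for H :: cgraph
    unfolding num_choices_def using assms by (simp add: prod.remove)
  from this[of G] this[of "G(v := [A])"] assms(2) show ?thesis by simp
qed

lemma cgraph_on_fun_upd_alt:
  "cgraph_on n G \<Longrightarrow> v < n \<Longrightarrow> A \<in> set (G v) \<Longrightarrow> cgraph_on n (G(v := [A]))"
  unfolding cgraph_on_def by auto

lemma num_edges_fun_upd_alt_le:
  assumes "A \<in> set (G v)"
  shows "num_edges n (G(v := [A])) \<le> num_edges n G"
  unfolding num_edges_def
proof (rule sum_mono)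
  fix w
  have "card A \<le> (\<Sum>B\<leftarrow>G v. card B)"
    using assms by (intro member_le_sum_list) auto
  then show "(\<Sum>B\<leftarrow>(G(v := [A])) w. card B) \<le> (\<Sum>B\<leftarrow>G w. card B)"
    by (cases "w = v") simp_all
qed

lemma col_step_cases:
  assumes q: "queue st = G # rest" and G: "cgraph_on n G" and F: "F < n"
  obtains (leaf) ds :: dfs_state where "dcost ds \<le> 1 + 2 * num_edges n G"
      "col_step n F st = Some (st\<lparr>queue := rest, outp := outp st @ [(vis ds, dedges ds)],
         ccost := ccost st + dcost ds + 2\<rparr>)"
  | (branch) ds :: dfs_state and v
    where "dcost ds \<le> 1 + 2 * num_edges n G" "v < n" "2 \<le> length (G v)"
      "col_step n F st = Some (st\<lparr>queue := rest @ map (\<lambda>A. G(v := [A])) (G v),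
         ccost := ccost st + 1 + dcost ds + length (G v) * (n + num_edges n G + 1)\<rparr>)"
proof -
  obtain ds where ds: "dfs_until G F = Some ds" "dcost ds \<le> 1 + 2 * num_edges n G"
    and found: "\<And>v. found ds = Some v \<Longrightarrow> v < n \<and> branching G v"
    using dfs_until_Some[OF G F] by blast
  show ?thesis
  proof (cases "found ds")
    case None
    then show ?thesis using leaf[of ds] q ds unfolding col_step_def by simp
  next
    case (Some v)
    then show ?thesis using branch[of ds v] found[OF Some] q ds
      unfolding col_step_def branching_def by simp
  qed
qed

text \<open>A leaf costs at most 3(n + m), the difference of the two rates; a graph with k \<ge> 2
  children costs at most 3k(n + m) \<le> 6(k - 1)(n + m).\<close>
definition collapse_inv :: "nat \<Rightarrow> nat \<Rightarrow> col_state option \<Rightarrow> bool" where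
  "collapse_inv n m s \<longleftrightarrow> (\<exists>st. s = Some st \<and>
     (\<forall>G\<in>set (queue st). cgraph_on n G \<and> num_edges n G \<le> m) \<and>
     ccost st \<le> 9 * (n + m) * length (outp st) + 6 * (n + m) * length (queue st))"

text \<open>2 num_choices - 1 bounds the size of a tree with at most num_choices leaves in which every
  inner node has at least two children.\<close>
definition queue_potential :: "nat \<Rightarrow> col_state option \<Rightarrow> nat" where
  "queue_potential n s = (case s of None \<Rightarrow> 0
     | Some st \<Rightarrow> (\<Sum>G\<leftarrow>queue st. 2 * num_choices n G - 1))"

lemma leaf_cost_le:
  assumes "c \<le> 9 * K * outs + 6 * K * Suc q" "d \<le> 1 + 2 * m" "K = n + m" "1 \<le> (n::nat)"
  shows "c + d + 2 \<le> 9 * K * Suc outs + 6 * K * q"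
proof -
  have "d + 2 \<le> 3 * K" using assms(2-4) by simp
  moreover have "9 * K * Suc outs + 6 * K * q = 9 * K * outs + 6 * K * Suc q + 3 * K"
    by (simp add: algebra_simps)
  ultimately show ?thesis using assms(1) by linarith
qed

lemma branch_cost_le:
  assumes "c \<le> 9 * K * outs + 6 * K * Suc q" "d \<le> 1 + 2 * m" "mG \<le> m" "K = n + m"
    "1 \<le> (n::nat)" "2 \<le> k"
  shows "c + 1 + d + k * (n + mG + 1) \<le> 9 * K * outs + 6 * K * (q + k)"
proof -
  obtain j where k: "k = j + 2" using assms(6) by (metis add.commute le_Suc_ex)
  have "1 + d \<le> 2 * K" using assms(2,4,5) by simp
  moreover have "k * (n + mG + 1) \<le> k * (2 * K)" using assms(3-5) by (intro mult_le_mono2) simp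
  moreover have "k * (2 * K) = 2 * K * j + 4 * K" by (simp add: k algebra_simps)
  moreover have "9 * K * outs + 6 * K * (q + k) = 9 * K * outs + 6 * K * Suc q + 6 * K * j + 6 * K"
    by (simp add: k algebra_simps)
  ultimately show ?thesis using assms(1) by linarith
qed

lemma col_step_inv:
  assumes F: "F < n" and I: "collapse_inv n m s" and ne: "s \<noteq> None \<and> queue (the s) \<noteq> []"
  shows "collapse_inv n m (col_step n F (the s))
    \<and> queue_potential n (col_step n F (the s)) < queue_potential n s"
proof -
  obtain st where s: "s = Some st"
    and Q: "\<forall>G\<in>set (queue st). cgraph_on n G \<and> num_edges n G \<le> m"
    and cost: "ccost st \<le> 9 * (n + m) * length (outp st) + 6 * (n + m) * length (queue st)"
    using I unfolding collapse_inv_def by blast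
  obtain G rest where q: "queue st = G # rest" using ne s by (cases "queue st") auto
  have G: "cgraph_on n G" and mG: "num_edges n G \<le> m" using Q q by auto
  have n: "1 \<le> n" using F by simp
  have cost': "ccost st \<le> 9 * (n + m) * length (outp st) + 6 * (n + m) * Suc (length rest)"
    using cost q by simp
  from q G F show ?thesis
  proof (cases rule: col_step_cases)
    case (leaf ds)
    have "dcost ds \<le> 1 + 2 * m" using leaf(1) mG by simp
    from leaf_cost_le[OF cost' this refl n] show ?thesis
      using leaf(2) Q q s num_choices_pos[of n G] unfolding collapse_inv_def queue_potential_def
      by auto
  next
    case (branch ds v)
    have "dcost ds \<le> 1 + 2 * m" using branch(1) mG by simp
    note cost_bound = branch_cost_le[OF cost' this mG refl n branch(3)]
    define k where "k = length (G v)"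
    define p where "p = num_choices n (G(v := [undefined]))"
    have children: "num_choices n (G(v := [A])) = p" for A
      unfolding p_def num_choices_def by (intro prod.cong) auto
    have "p \<ge> 1" unfolding p_def by (rule num_choices_pos)
    have "num_choices n G = k * p"
      using num_choices_fun_upd_alt[OF branch(2), of G undefined] branch(3) children
      unfolding k_def by simp
    moreover have "(\<Sum>H\<leftarrow>map (\<lambda>A. G(v := [A])) (G v). 2 * num_choices n H - 1) = k * (2 * p - 1)"
      by (simp add: comp_def children sum_list_triv k_def)
    moreover have "k * (2 * p - 1) < 2 * (k * p) - 1"
      using \<open>p \<ge> 1\<close> branch(3) unfolding k_def by (cases p) (auto simp: algebra_simps)
    moreover have "\<forall>H\<in>set (map (\<lambda>A. G(v := [A])) (G v)). cgraph_on n H \<and> num_edges n H \<le> m"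
      using cgraph_on_fun_upd_alt[OF G branch(2)] num_edges_fun_upd_alt_le[of _ G v n] mG
      by fastforce
    ultimately show ?thesis using cost_bound branch(4) Q q s
      unfolding collapse_inv_def queue_potential_def k_def by auto
  qed
qed

theorem mainTheorem1:
  "\<exists>C::nat. \<forall>n F M. wf_cdm n F M \<longrightarrow>
     (\<exists>st. collapse n F M = Some st \<and>
           ccost st \<le> C * length (outp st) * (n + num_edges n M))"
proof (intro exI[of _ 9] allI impI)
  fix n F M assume wf: "wf_cdm n F M"
  then have F: "F < n" unfolding wf_cdm_def by simp
  have init: "collapse_inv n (num_edges n M) (Some \<lparr>queue = [M], outp = [], ccost = 0\<rparr>)"
    using wf unfolding wf_cdm_def collapse_inv_def cgraph_on_def by simp
  obtain t where run: "while_option (\<lambda>s. s \<noteq> None \<and> queue (the s) \<noteq> [])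
      (\<lambda>s. col_step n F (the s)) (Some \<lparr>queue = [M], outp = [], ccost = 0\<rparr>) = Some t"
    and inv: "collapse_inv n (num_edges n M) t"
    and stop: "\<not> (t \<noteq> None \<and> queue (the t) \<noteq> [])"
    using while_option_Some_invariant[of "collapse_inv n (num_edges n M)"
      "\<lambda>s. s \<noteq> None \<and> queue (the s) \<noteq> []" "\<lambda>s. col_step n F (the s)" "queue_potential n",
      OF col_step_inv[OF F] init] by blast
  from inv stop obtain st where "t = Some st" "queue st = []"
    and "ccost st \<le> 9 * (n + num_edges n M) * length (outp st)"
    unfolding collapse_inv_def by auto
  with run show "\<exists>st. collapse n F M = Some st \<and>
      ccost st \<le> 9 * length (outp st) * (n + num_edges n M)"
    unfolding collapse_def by (auto simp: algebra_simps)
qed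

end
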